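(* Let $p$ be an odd prime and $r\ge1$ odd. (i) If $p\equiv -1\pmod 8$, then $K=\begin{pmatrix}\frac{4}{p^r}&1\\1&\frac{p^r+1}{4}\end{pmatrix}^{-1}$ is an even integral positive-definite matrix whose lattice has discriminant form isometric to $A_{p^r}$ (and signature $2$). (ii) If $p\equiv -3\pmod 8$, then $K=\begin{pmatrix}\frac4{p^r}&1&0&0\\1&\frac{p^r+3}{4}&1&0\\0&1&2&1\\0&0&1&2\end{pmatrix}^{-1}$ is an even integral positive-definite matrix whose lattice has discriminant form isometric to $A_{p^r}$ (signature $4$). (iii) If $p\equiv 3\pmod 8$, then $K=\begin{pmatrix}\frac{2}{p^r}&1\\1&\frac{p^r+1}{2}\end{pmatrix}^{-1}$ is an even integral positive-definite matrix whose lattice has discriminant form isometric to $B_{p^r}$ (signature $2$). (iv) For every even $r\ge 2$, $K=\begin{pmatrix}\frac{3}{2^r}&1&0\\1&\frac{2^r+2}{3}&1\\0&1&2\end{pmatrix}^{-1}$ is an even integral positive-definite matrix whose lattice has discriminant form isometric to $D_{2^r}$ (signature $3$).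
   Context: For an even positive-definite integral symmetric $n\times n$ matrix $K$, the lattice $L=\mathbb{Z}^n$ with form $x^TKy$ has discriminant group $L^*/L\cong\mathbb{Z}^n/K\mathbb{Z}^n$ and discriminant form $q_L(x+L)=\tfrac12 x^TKx\in\mathbb{Q}/\mathbb{Z}$ for $x\in L^*=K^{-1}\mathbb{Z}^n$ (in coordinates, $q_L$ of the class of $K^{-1}e_i$ is $\tfrac12(K^{-1})_{ii}$). Metric groups: $A_{p^r}=(\mathbb{Z}/p^r, mx^2/p^r)$ with $\gcd(m,p)=1$, $\left(\frac{2m}{p}\right)=1$; $B_{p^r}=(\mathbb{Z}/p^r, nx^2/p^r)$ with $\gcd(n,p)=1$, $\left(\frac{2n}{p}\right)=-1$; $D_{2^r}=(\mathbb{Z}/2^r,-5x^2/2^{r+1})$. *)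

theory Defs
  imports "HOL-Analysis.Analysis" "HOL-Number_Theory.Number_Theory"
begin

text \<open>Lattice L = Z^n with Gram matrix K (an n x n real matrix, n given by the index type).\<close>

definition int_vec :: "real^'n \<Rightarrow> bool" where
  "int_vec x \<longleftrightarrow> (\<forall>i. x $ i \<in> \<int>)"

definition even_integral_sym :: "real^'n^'n \<Rightarrow> bool" where
  "even_integral_sym K \<longleftrightarrow> transpose K = K \<and> (\<forall>i j. K $ i $ j \<in> \<int>) \<and> (\<forall>i. K $ i $ i / 2 \<in> \<int>)"

definition pos_def :: "real^'n^'n \<Rightarrow> bool" where
  "pos_def K \<longleftrightarrow> (\<forall>x. x \<noteq> 0 \<longrightarrow> x \<bullet> (K *v x) > 0)"

definition dual_lattice :: "real^'n^'n \<Rightarrow> (real^'n) set" where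
  "dual_lattice K = {x. int_vec (K *v x)}"

text \<open>Discriminant quadratic form q_L(x + L) = x^T K x / 2 (taken mod 1).\<close>
definition disc_q :: "real^'n^'n \<Rightarrow> real^'n \<Rightarrow> real" where
  "disc_q K x = (x \<bullet> (K *v x)) / 2"

text \<open>The discriminant form of K is isometric to the cyclic metric group (Z/N, c x^2 mod 1):
  there is a map phi from Z to L^* (representatives) inducing a group isomorphism
  Z/N -> L^*/L that carries c x^2 mod 1 to q_L.\<close>
definition disc_iso_cyclic :: "real^'n^'n \<Rightarrow> int \<Rightarrow> real \<Rightarrow> bool" where
  "disc_iso_cyclic K N c \<longleftrightarrow>
     (\<exists>\<phi> :: int \<Rightarrow> real^'n.
        (\<forall>k. \<phi> k \<in> dual_lattice K) \<and>
        (\<forall>k l. int_vec (\<phi> (k + l) - \<phi> k - \<phi> l)) \<and>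
        (\<forall>k l. int_vec (\<phi> k - \<phi> l) \<longleftrightarrow> [k = l] (mod N)) \<and>
        (\<forall>x \<in> dual_lattice K. \<exists>k. int_vec (x - \<phi> k)) \<and>
        (\<forall>k. disc_q K (\<phi> k) - c * (of_int k)^2 \<in> \<int>))"

definition iso_A :: "real^'n^'n \<Rightarrow> nat \<Rightarrow> nat \<Rightarrow> bool" where
  "iso_A K p r \<longleftrightarrow> (\<exists>m::int. coprime m (int p) \<and> Legendre (2*m) (int p) = 1 \<and>
      disc_iso_cyclic K (int p ^ r) (of_int m / real p ^ r))"

definition iso_B :: "real^'n^'n \<Rightarrow> nat \<Rightarrow> nat \<Rightarrow> bool" where
  "iso_B K p r \<longleftrightarrow> (\<exists>n::int. coprime n (int p) \<and> Legendre (2*n) (int p) = -1 \<and>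
      disc_iso_cyclic K (int p ^ r) (of_int n / real p ^ r))"

definition iso_D :: "real^'n^'n \<Rightarrow> nat \<Rightarrow> bool" where
  "iso_D K r \<longleftrightarrow> disc_iso_cyclic K (2 ^ r) (-5 / 2 ^ (r + 1))"

end

theory Submission
  imports Defs
begin

text \<open>In every case \<open>K = M\<^sup>-\<^sup>1\<close> where all entries of M are integers except one diagonal
  entry \<open>t/N\<close>. Hence \<open>L\<^sup>* = M \<int>\<^sup>n\<close> and \<open>L\<^sup>*/L\<close> is cyclic of order N, generated by \<open>a\<close>
  times the column of M through that entry for any \<open>a\<close> with \<open>at\<close> prime to N; the generator has
  norm \<open>a\<^sup>2t/(2N)\<close> mod 1. Computing K explicitly shows that it is even and integral, and M is
  positive definite by completing squares. In cases (i) and (ii) the norm is \<open>2/p\<^sup>r\<close> and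
  \<open>(4/p) = 1\<close>; in case (iii) it is \<open>1/p\<^sup>r\<close> and \<open>(2/p) = -1\<close> for \<open>p \<equiv> 3 (mod 8)\<close>; in case (iv)
  an odd \<open>a\<close> with \<open>3a\<^sup>2 \<equiv> -5 (mod 2\<^sup>r\<^sup>+\<^sup>1)\<close> exists by Hensel lifting.\<close>

lemma matrix_inv_eqI:
  fixes A B :: "real^'n^'n"
  assumes "A ** B = mat 1"
  shows "invertible A" and "matrix_inv A = B"
proof -
  have BA: "B ** A = mat 1" using assms matrix_left_right_inverse by blast
  then show "invertible A" unfolding invertible_def using assms by blast
  have "A' = B" if "A ** A' = mat 1 \<and> A' ** A = mat 1" for A'
    using that BA by (metis matrix_mul_assoc matrix_mul_lid matrix_mul_rid)
  then show "matrix_inv A = B"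
    unfolding matrix_inv_def using assms BA by (metis (mono_tags, lifting) someI_ex)
qed

lemma pos_def_inverse:
  fixes M K :: "real^'n^'n"
  assumes MK: "M ** K = mat 1" and pos: "\<And>y. y \<noteq> 0 \<Longrightarrow> y \<bullet> (M *v y) > 0"
  shows "pos_def K"
  unfolding pos_def_def
proof (intro allI impI)
  fix x :: "real^'n" assume "x \<noteq> 0"
  define y where "y = K *v x"
  have x: "x = M *v y" unfolding y_def by (simp add: matrix_vector_mul_assoc MK)
  with \<open>x \<noteq> 0\<close> have "y \<noteq> 0" by auto
  moreover have "x \<bullet> (K *v x) = y \<bullet> (M *v y)" using x y_def by (simp add: inner_commute)
  ultimately show "x \<bullet> (K *v x) > 0" using pos by simp
qed

lemma of_int_divide_in_Ints_iff:
  fixes x N :: int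
  assumes "N > 0"
  shows "(of_int x / of_int N :: real) \<in> \<int> \<longleftrightarrow> N dvd x"
proof
  assume "(of_int x / of_int N :: real) \<in> \<int>"
  then obtain z where "(of_int x / of_int N :: real) = of_int z" by (auto elim: Ints_cases)
  then have "(of_int x :: real) = of_int (N * z)" using assms by (simp add: field_simps)
  then show "N dvd x" by (simp only: of_int_eq_iff) simp
qed (use assms in auto)

lemma matrix_vector_mult_axis: "(M :: real^'n^'n) *v axis j s = (\<chi> i. s * M $ i $ j)"
  by (simp add: vec_eq_iff matrix_vector_mult_def axis_def if_distrib[where f="\<lambda>z. _ * z"]
      mult.commute cong: if_cong)

locale fractional_corner =
  fixes M :: "real^'n^'n" and j :: 'n and N t :: int
  assumes N_pos: "N > 0"
    and corner: "M $ j $ j = of_int t / of_int N"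
    and column_Ints: "\<And>i. i \<noteq> j \<Longrightarrow> M $ i $ j \<in> \<int>"
    and other_columns_Ints: "\<And>i k. k \<noteq> j \<Longrightarrow> M $ i $ k \<in> \<int>"
begin

lemma int_vec_column_multiple_iff: "int_vec (M *v axis j (of_int k)) \<longleftrightarrow> N dvd t * k"
proof -
  have "int_vec (M *v axis j (of_int k)) \<longleftrightarrow> (\<forall>i. of_int k * M $ i $ j \<in> \<int>)"
    by (simp add: int_vec_def matrix_vector_mult_axis)
  also have "\<dots> \<longleftrightarrow> of_int k * M $ j $ j \<in> \<int>"
    using column_Ints by (metis Ints_mult Ints_of_int)
  also have "\<dots> \<longleftrightarrow> (of_int (t * k) / of_int N :: real) \<in> \<int>"
    by (simp add: corner mult.commute)
  also have "\<dots> \<longleftrightarrow> N dvd t * k" by (rule of_int_divide_in_Ints_iff[OF N_pos])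
  finally show ?thesis .
qed

lemma int_vec_mult:
  assumes u: "int_vec u" and N_dvd: "u $ j / of_int N \<in> \<int>"
  shows "int_vec (M *v u)"
proof -
  have "M $ i $ k * u $ k \<in> \<int>" for i k
  proof (cases "k = j")
    case True
    have "M $ j $ j * u $ j = of_int t * (u $ j / of_int N)" by (simp add: corner)
    with N_dvd have "M $ j $ j * u $ j \<in> \<int>" by (metis Ints_mult Ints_of_int)
    with True u show ?thesis
      by (cases "i = j") (auto simp: int_vec_def column_Ints)
  qed (use u other_columns_Ints in \<open>auto simp: int_vec_def\<close>)
  then show ?thesis by (simp add: int_vec_def matrix_vector_mult_def Ints_sum)
qed

lemma dual_lattice_cyclic:
  assumes MK: "M ** K = mat 1" and "coprime a N" and "x \<in> dual_lattice K"
  shows "\<exists>k. int_vec (x - M *v axis j (of_int (a * k)))"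
proof -
  define v where "v = K *v x"
  have v: "int_vec v" using assms(3) by (simp add: dual_lattice_def v_def)
  have x: "x = M *v v" by (simp add: v_def matrix_vector_mul_assoc MK)
  obtain z where z: "v $ j = of_int z" using v unfolding int_vec_def by (metis Ints_cases)
  obtain b where "[a * b = 1] (mod N)" using \<open>coprime a N\<close> by (metis cong_solve_coprime_int)
  then obtain y where y: "1 - a * b = N * y" by (metis cong_iff_dvd_diff cong_sym dvdE)
  define u where "u = v - axis j (of_int (a * (b * z)))"
  have "u $ j = of_int (z * (1 - a * b))" by (simp add: u_def z algebra_simps)
  then have "u $ j = of_int N * of_int (z * y)" by (simp add: y)
  then have "u $ j / of_int N \<in> \<int>" using N_pos by simp
  moreover have "int_vec u" using v by (simp add: u_def int_vec_def axis_def)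
  ultimately have "int_vec (M *v u)" by (rule int_vec_mult[rotated])
  moreover have "x - M *v axis j (of_int (a * (b * z))) = M *v u"
    by (simp add: x u_def matrix_vector_mult_diff_distrib)
  ultimately show ?thesis by metis
qed

lemma disc_iso_cyclic_inverse:
  assumes MK: "M ** K = mat 1" and coprime: "coprime (a * t) N"
    and norm: "of_int a ^ 2 * M $ j $ j / 2 - c \<in> \<int>"
  shows "disc_iso_cyclic K N c"
proof -
  define \<phi> where "\<phi> k = M *v axis j (of_int (a * k))" for k
  have KM: "K ** M = mat 1" using MK matrix_left_right_inverse by blast
  have K\<phi>: "K *v \<phi> k = axis j (of_int (a * k))" for k
    by (simp add: \<phi>_def matrix_vector_mul_assoc KM)
  have \<phi>_diff: "\<phi> k - \<phi> l = M *v axis j (of_int (a * (k - l)))" for k l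
    by (simp add: \<phi>_def vec_eq_iff matrix_vector_mult_axis algebra_simps)
  show ?thesis
    unfolding disc_iso_cyclic_def
  proof (intro exI[of _ \<phi>] conjI allI ballI)
    fix k l
    show "\<phi> k \<in> dual_lattice K"
      by (simp add: dual_lattice_def K\<phi> int_vec_def axis_def)
    show "int_vec (\<phi> (k + l) - \<phi> k - \<phi> l)"
      by (simp add: int_vec_def \<phi>_def matrix_vector_mult_axis algebra_simps)
    have "int_vec (\<phi> k - \<phi> l) \<longleftrightarrow> N dvd t * (a * (k - l))"
      by (simp only: \<phi>_diff int_vec_column_multiple_iff)
    also have "\<dots> \<longleftrightarrow> N dvd k - l"
      using coprime by (metis coprime_commute coprime_dvd_mult_right_iff mult.assoc mult.commute)
    finally show "int_vec (\<phi> k - \<phi> l) \<longleftrightarrow> [k = l] (mod N)" by (simp add: cong_iff_dvd_diff)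
    have "\<phi> k \<bullet> (K *v \<phi> k) = of_int (a * k) * \<phi> k $ j"
      by (simp add: K\<phi> inner_vec_def axis_def if_distrib[where f="\<lambda>z. _ * z"] cong: if_cong)
    then have "disc_q K (\<phi> k) - c * of_int k ^ 2 = of_int k ^ 2 * (of_int a ^ 2 * M $ j $ j / 2 - c)"
      by (simp add: disc_q_def \<phi>_def matrix_vector_mult_axis power2_eq_square algebra_simps)
    then show "disc_q K (\<phi> k) - c * of_int k ^ 2 \<in> \<int>" using norm by simp
  next
    fix x assume "x \<in> dual_lattice K"
    with MK coprime show "\<exists>k. int_vec (x - \<phi> k)"
      unfolding \<phi>_def by (intro dual_lattice_cyclic) simp_all
  qed
qed

end

lemma odd_power_cong_mod_8:
  fixes x :: int
  assumes "odd x" and "odd r"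
  shows "[x ^ r = x] (mod 8)"
proof -
  obtain k where x: "x = 2 * k + 1" using \<open>odd x\<close> by (rule oddE)
  obtain m where m: "k * (k + 1) = 2 * m" by (metis even_mult_iff odd_even_add odd_one dvdE)
  have "x ^ 2 - 1 = 4 * (k * (k + 1))" by (simp add: x power2_eq_square algebra_simps)
  then have "x ^ 2 - 1 = 8 * m" by (simp add: m)
  then have "[x ^ 2 = 1 ^ 2] (mod 8)" by (simp add: cong_iff_dvd_diff)
  then have "[x * (x ^ 2) ^ (r div 2) = x * (1 ^ 2) ^ (r div 2)] (mod 8)"
    by (rule cong_mult[OF cong_refl cong_pow])
  moreover have "x ^ r = x * (x ^ 2) ^ (r div 2)"
    using \<open>odd r\<close> by (metis odd_two_times_div_two_succ power_Suc power_mult add.commute plus_1_eq_Suc)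
  ultimately show ?thesis by simp
qed

lemma Legendre_4_eq_1:
  assumes "prime p" and "odd p"
  shows "Legendre 4 (int p) = 1"
proof -
  have "\<not> [4 = 0] (mod int p)"
  proof
    assume "[4 = 0] (mod int p)"
    then have "p dvd 4" by (simp add: cong_0_iff flip: int_dvd_int_iff)
    moreover have "p \<ge> 2" using assms(1) prime_ge_2_nat by blast
    ultimately have "p = 4 \<or> p = 2 \<or> p = 3" using dvd_imp_le[of p 4] by (auto simp: le_Suc_eq)
    with \<open>p dvd 4\<close> \<open>odd p\<close> show False by auto
  qed
  moreover have "QuadRes (int p) 4" unfolding QuadRes_def by (rule exI[of _ 2]) simp
  ultimately show ?thesis by (simp add: Legendre_def)
qed

text \<open>Gauss's lemma: for \<open>p = 8k + 3\<close> exactly the \<open>2k + 1\<close> doubles \<open>2x\<close> with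
  \<open>2k < x \<le> 4k + 1\<close> exceed \<open>(p - 1)/2\<close>.\<close>

lemma Legendre_2_cong_3_mod_8:
  assumes "prime p" and "[int p = 3] (mod 8)"
  shows "Legendre 2 (int p) = -1"
proof -
  obtain k where pk: "int p = 8 * k + 3"
    using assms(2) by (metis cong_iff_dvd_diff cong_sym dvdE diff_eq_eq add.commute)
  have "k \<ge> 0" using pk by linarith
  have "\<not> [2 = 0] (mod int p)"
  proof
    assume "[2 = 0] (mod int p)"
    then have "int p dvd 2" by (simp add: cong_0_iff)
    then have "int p \<le> 2" using zdvd_imp_le[of "int p" 2] by simp
    with pk \<open>k \<ge> 0\<close> show False by linarith
  qed
  moreover have "2 < p" using pk \<open>k \<ge> 0\<close> by linarith
  ultimately interpret G: GAUSS p 2 using assms(1) by unfold_locales auto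
  have half: "(int p - 1) div 2 = 4 * k + 1" using pk by simp
  have C: "G.C = (\<lambda>x. x * 2) ` {0<..4 * k + 1}"
    unfolding G.C_def G.B_def G.A_def half image_image
    by (rule image_cong[OF refl]) (use pk in auto)
  have "G.E = (\<lambda>x. x * 2) ` {2 * k + 1..4 * k + 1}"
    unfolding G.E_def C half using \<open>k \<ge> 0\<close> by force
  then have "card G.E = card {2 * k + 1..4 * k + 1}"
    by (simp add: card_image inj_on_def)
  also have "\<dots> = Suc (2 * nat k)" using \<open>k \<ge> 0\<close> by simp
  finally have "card G.E = Suc (2 * nat k)" .
  then show ?thesis using G.gauss_lemma by simp
qed

text \<open>Hensel lifting: if \<open>3a\<^sup>2 + 5 = 2\<^sup>e\<^sup>+\<^sup>3 m\<close> with m odd, then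
  \<open>3(a + 2\<^sup>e\<^sup>+\<^sup>2)\<^sup>2 + 5 = 2\<^sup>e\<^sup>+\<^sup>3 (m + 3a) + 3 \<cdot> 2\<^sup>2\<^sup>e\<^sup>+\<^sup>4\<close> with \<open>m + 3a\<close> even.\<close>

lemma odd_solution_3_sq_add_5_mod_pow2: "\<exists>a::int. odd a \<and> 2 ^ (e + 3) dvd 3 * a ^ 2 + 5"
proof (induction e)
  case 0
  show ?case by (rule exI[of _ 1]) simp
next
  case (Suc e)
  then obtain a m :: int where a: "odd a" and m: "3 * a ^ 2 + 5 = 2 ^ (e + 3) * m" by blast
  define g :: int where "g = 2 ^ e"
  have pow: "(2::int) ^ (e + 3) = 8 * g" "(2::int) ^ (Suc e + 3) = 16 * g" by (simp_all add: g_def power_add)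
  show ?case
  proof (cases "even m")
    case True
    then obtain n where "m = 2 * n" by blast
    with m have "3 * a ^ 2 + 5 = 2 ^ (Suc e + 3) * n" by (simp add: power_add)
    with a show ?thesis by (intro exI[of _ a]) simp
  next
    case False
    with a have "even (m + 3 * a)" by simp
    then obtain n where n: "m + 3 * a = 2 * n" by blast
    have "3 * (a + 4 * g) ^ 2 + 5 = 8 * g * (m + 3 * a) + 48 * g ^ 2"
      using m by (simp add: pow power2_eq_square algebra_simps)
    also have "\<dots> = 2 ^ (Suc e + 3) * (n + 3 * g)"
      unfolding pow n by (simp add: power2_eq_square algebra_simps)
    finally show ?thesis using a by (intro exI[of _ "a + 4 * g"]) (simp add: g_def)
  qed
qed

lemma iso_A_of_disc_2:
  assumes "prime p" and "odd p" and "disc_iso_cyclic K (int p ^ r) (2 / real p ^ r)"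
  shows "iso_A K p r"
  unfolding iso_A_def
proof (intro exI[of _ 2] conjI)
  show "coprime 2 (int p)" using assms(1,2)
    by (metis coprime_int_iff int_eq_iff_numeral prime_imp_coprime two_is_prime)
  show "Legendre (2 * 2) (int p) = 1" using Legendre_4_eq_1[OF assms(1,2)] by simp
qed (use assms(3) in simp)

lemma iso_B_of_disc_1:
  assumes "prime p" and "[int p = 3] (mod 8)" and "disc_iso_cyclic K (int p ^ r) (1 / real p ^ r)"
  shows "iso_B K p r"
  unfolding iso_B_def
  using Legendre_2_cong_3_mod_8[OF assms(1,2)] assms(3) by (intro exI[of _ 1]) simp

lemma binary_form_pos:
  fixes Q c a b :: real
  assumes "Q > 0" and "c > 0" and "a \<noteq> 0 \<or> b \<noteq> 0"
  shows "c / Q * a ^ 2 + 2 * a * b + (Q + 1) / c * b ^ 2 > 0"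
proof -
  have eq: "c / Q * a ^ 2 + 2 * a * b + (Q + 1) / c * b ^ 2 = (c * a + Q * b) ^ 2 / (c * Q) + b ^ 2 / c"
    using assms(1,2) by (simp add: field_simps power2_eq_square)
  have "(c * a + Q * b) ^ 2 / (c * Q) \<ge> 0" "b ^ 2 / c \<ge> 0" using assms(1,2) by simp_all
  moreover have "b \<noteq> 0 \<Longrightarrow> b ^ 2 / c > 0" using assms(2) by simp
  moreover have "b = 0 \<Longrightarrow> (c * a + Q * b) ^ 2 / (c * Q) > 0" using assms by simp
  ultimately show ?thesis unfolding eq by linarith
qed

lemma ternary_form_pos:
  fixes Q a b c :: real
  assumes "Q > 0" and "a \<noteq> 0 \<or> b \<noteq> 0 \<or> c \<noteq> 0"
  shows "3 / Q * a ^ 2 + 2 * a * b + (Q + 2) / 3 * b ^ 2 + 2 * b * c + 2 * c ^ 2 > 0"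
proof -
  have eq: "3 / Q * a ^ 2 + 2 * a * b + (Q + 2) / 3 * b ^ 2 + 2 * b * c + 2 * c ^ 2
      = (3 * a + Q * b) ^ 2 / (3 * Q) + 2 / 3 * (b + 3 / 2 * c) ^ 2 + c ^ 2 / 2"
    using assms(1) by (simp add: field_simps power2_eq_square)
  have "(3 * a + Q * b) ^ 2 / (3 * Q) \<ge> 0" using assms(1) by simp
  moreover have "c \<noteq> 0 \<Longrightarrow> c ^ 2 / 2 > 0" by simp
  moreover have "c = 0 \<Longrightarrow> b \<noteq> 0 \<Longrightarrow> 2 / 3 * (b + 3 / 2 * c) ^ 2 > 0" by simp
  moreover have "c = 0 \<Longrightarrow> b = 0 \<Longrightarrow> (3 * a + Q * b) ^ 2 / (3 * Q) > 0" using assms by simp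
  moreover have "2 / 3 * (b + 3 / 2 * c) ^ 2 \<ge> 0" "c ^ 2 / 2 \<ge> 0" by simp_all
  ultimately show ?thesis unfolding eq using assms(2) by smt
qed

lemma quaternary_form_pos:
  fixes Q a b c d :: real
  assumes "Q > 0" and "a \<noteq> 0 \<or> b \<noteq> 0 \<or> c \<noteq> 0 \<or> d \<noteq> 0"
  shows "4 / Q * a ^ 2 + 2 * a * b + (Q + 3) / 4 * b ^ 2 + 2 * b * c + 2 * c ^ 2 + 2 * c * d + 2 * d ^ 2 > 0"
proof -
  have eq: "4 / Q * a ^ 2 + 2 * a * b + (Q + 3) / 4 * b ^ 2 + 2 * b * c + 2 * c ^ 2 + 2 * c * d + 2 * d ^ 2
      = (2 * a + Q * b / 2) ^ 2 / Q + 3 / 4 * (b + 4 / 3 * c) ^ 2 + 2 / 3 * (c + 3 / 2 * d) ^ 2 + d ^ 2 / 2"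
    using assms(1) by (simp add: field_simps power2_eq_square)
  have "(2 * a + Q * b / 2) ^ 2 / Q \<ge> 0" using assms(1) by simp
  moreover have "3 / 4 * (b + 4 / 3 * c) ^ 2 \<ge> 0" "2 / 3 * (c + 3 / 2 * d) ^ 2 \<ge> 0" "d ^ 2 / 2 \<ge> 0"
    by simp_all
  moreover have "d \<noteq> 0 \<Longrightarrow> d ^ 2 / 2 > 0" by simp
  moreover have "d = 0 \<Longrightarrow> c \<noteq> 0 \<Longrightarrow> 2 / 3 * (c + 3 / 2 * d) ^ 2 > 0" by simp
  moreover have "d = 0 \<Longrightarrow> c = 0 \<Longrightarrow> b \<noteq> 0 \<Longrightarrow> 3 / 4 * (b + 4 / 3 * c) ^ 2 > 0" by simp
  moreover have "d = 0 \<Longrightarrow> c = 0 \<Longrightarrow> b = 0 \<Longrightarrow> (2 * a + Q * b / 2) ^ 2 / Q > 0" using assms by simp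
  ultimately show ?thesis unfolding eq using assms(2) by smt
qed

lemma vector_4 [simp]:
  "(vector [x, y, z, w] :: 'a::zero^4) $ 1 = x"
  "(vector [x, y, z, w] :: 'a::zero^4) $ 2 = y"
  "(vector [x, y, z, w] :: 'a::zero^4) $ 3 = z"
  "(vector [x, y, z, w] :: 'a::zero^4) $ 4 = w"
  unfolding vector_def by simp_all

lemma lattice_2_cong_neg1_mod_8:
  fixes N :: int
  assumes "N > 0" and "[N = -1] (mod 8)"
  defines "M \<equiv> vector [vector [4 / of_int N, 1], vector [1, (of_int N + 1) / 4]] :: real^2^2"
  shows "invertible M \<and> even_integral_sym (matrix_inv M) \<and> pos_def (matrix_inv M) \<and>
    disc_iso_cyclic (matrix_inv M) N (2 / of_int N)"
proof -
  obtain j where j: "N + 1 = 8 * j" using assms(2) by (metis cong_iff_dvd_diff diff_minus_eq_add dvdE)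
  then have jN: "(of_int j :: real) = (of_int N + 1) / 8" by (simp add: field_simps flip: of_int_mult)
  define K where "K = (vector [vector [of_int (2 * j * N), - of_int N], vector [- of_int N, 4]] :: real^2^2)"
  have MK: "M ** K = mat 1" using \<open>N > 0\<close>
    by (simp add: M_def K_def jN vec_eq_iff forall_2 matrix_matrix_mult_def sum_2 mat_def field_simps)
  have M22: "(of_int N + 1) / 4 = (of_int (2 * j) :: real)" by (simp add: jN)
  have "even_integral_sym K"
    by (simp add: even_integral_sym_def K_def vec_eq_iff forall_2 transpose_def)
  moreover have "pos_def K"
  proof (rule pos_def_inverse[OF MK])
    fix y :: "real^2" assume "y \<noteq> 0"
    then have "y $ 1 \<noteq> 0 \<or> y $ 2 \<noteq> 0" by (simp add: vec_eq_iff forall_2)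
    moreover have "y \<bullet> (M *v y) = 4 / of_int N * (y $ 1) ^ 2 + 2 * (y $ 1) * (y $ 2) + (of_int N + 1) / 4 * (y $ 2) ^ 2"
      by (simp add: M_def inner_vec_def sum_2 matrix_vector_mult_def power2_eq_square algebra_simps)
    ultimately show "y \<bullet> (M *v y) > 0" using binary_form_pos[of "of_int N" 4] \<open>N > 0\<close> by simp
  qed
  moreover have "disc_iso_cyclic K N (2 / of_int N)"
  proof -
    interpret fractional_corner M 1 N 4
    proof
      show "M $ i $ 1 \<in> \<int>" if "i \<noteq> 1" for i
        using that exhaust_2[of i] by (auto simp: M_def)
      show "M $ i $ k \<in> \<int>" if "k \<noteq> 1" for i k
        using that exhaust_2[of i] exhaust_2[of k] by (auto simp: M_def M22)
    qed (use \<open>N > 0\<close> in \<open>simp_all add: M_def\<close>)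
    have "odd N" using j by presburger
    then have "coprime 4 N" using coprime_power_left_iff[of 2 2 N] by simp
    then show ?thesis by (intro disc_iso_cyclic_inverse[OF MK, of 1]) (simp_all add: M_def)
  qed
  ultimately show ?thesis using matrix_inv_eqI[OF MK] by simp
qed

lemma lattice_4_cong_neg3_mod_8:
  fixes N :: int
  assumes "N > 0" and "[N = -3] (mod 8)"
  defines "M \<equiv> vector [vector [4 / of_int N, 1, 0, 0], vector [1, (of_int N + 3) / 4, 1, 0],
                      vector [0, 1, 2, 1], vector [0, 0, 1, 2]] :: real^4^4"
  shows "invertible M \<and> even_integral_sym (matrix_inv M) \<and> pos_def (matrix_inv M) \<and>
    disc_iso_cyclic (matrix_inv M) N (2 / of_int N)"
proof -
  obtain j where j: "N + 3 = 8 * j" using assms(2) by (metis cong_iff_dvd_diff diff_minus_eq_add dvdE)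
  then have jN: "(of_int j :: real) = (of_int N + 3) / 8" by (simp add: field_simps flip: of_int_mult)
  define K where "K = (vector [vector [of_int (2 * ((3 * j - 1) * N)), - 3 * of_int N, 2 * of_int N, - of_int N],
                               vector [- 3 * of_int N, 12, -8, 4],
                               vector [2 * of_int N, -8, 6, -3],
                               vector [- of_int N, 4, -3, 2]] :: real^4^4)"
  have MK: "M ** K = mat 1" using \<open>N > 0\<close>
    by (simp add: M_def K_def jN vec_eq_iff forall_4 matrix_matrix_mult_def sum_4 mat_def field_simps)
  have M22: "(of_int N + 3) / 4 = (of_int (2 * j) :: real)" by (simp add: jN)
  have "even_integral_sym K"
    by (simp add: even_integral_sym_def K_def vec_eq_iff forall_4 transpose_def)
  moreover have "pos_def K"
  proof (rule pos_def_inverse[OF MK])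
    fix y :: "real^4" assume "y \<noteq> 0"
    then have "y $ 1 \<noteq> 0 \<or> y $ 2 \<noteq> 0 \<or> y $ 3 \<noteq> 0 \<or> y $ 4 \<noteq> 0" by (simp add: vec_eq_iff forall_4)
    moreover have "y \<bullet> (M *v y) = 4 / of_int N * (y $ 1) ^ 2 + 2 * (y $ 1) * (y $ 2)
        + (of_int N + 3) / 4 * (y $ 2) ^ 2 + 2 * (y $ 2) * (y $ 3) + 2 * (y $ 3) ^ 2
        + 2 * (y $ 3) * (y $ 4) + 2 * (y $ 4) ^ 2"
      by (simp add: M_def inner_vec_def sum_4 matrix_vector_mult_def power2_eq_square algebra_simps)
    ultimately show "y \<bullet> (M *v y) > 0" using quaternary_form_pos[of "of_int N"] \<open>N > 0\<close> by simp
  qed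
  moreover have "disc_iso_cyclic K N (2 / of_int N)"
  proof -
    interpret fractional_corner M 1 N 4
    proof
      show "M $ i $ 1 \<in> \<int>" if "i \<noteq> 1" for i
        using that exhaust_4[of i] by (auto simp: M_def)
      show "M $ i $ k \<in> \<int>" if "k \<noteq> 1" for i k
        using that exhaust_4[of i] exhaust_4[of k] by (auto simp: M_def M22)
    qed (use \<open>N > 0\<close> in \<open>simp_all add: M_def\<close>)
    have "odd N" using j by presburger
    then have "coprime 4 N" using coprime_power_left_iff[of 2 2 N] by simp
    then show ?thesis by (intro disc_iso_cyclic_inverse[OF MK, of 1]) (simp_all add: M_def)
  qed
  ultimately show ?thesis using matrix_inv_eqI[OF MK] by simp
qed

lemma lattice_2_cong_3_mod_4:
  fixes N :: int
  assumes "N > 0" and "[N = 3] (mod 4)"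
  defines "M \<equiv> vector [vector [2 / of_int N, 1], vector [1, (of_int N + 1) / 2]] :: real^2^2"
  shows "invertible M \<and> even_integral_sym (matrix_inv M) \<and> pos_def (matrix_inv M) \<and>
    disc_iso_cyclic (matrix_inv M) N (1 / of_int N)"
proof -
  have "4 dvd N - 3" using assms(2) by (simp add: cong_iff_dvd_diff)
  then have "4 dvd N + 1" by presburger
  then obtain j where j: "N + 1 = 4 * j" by blast
  then have jN: "(of_int j :: real) = (of_int N + 1) / 4" by (simp add: field_simps flip: of_int_mult)
  define K where "K = (vector [vector [of_int (2 * (j * N)), - of_int N], vector [- of_int N, 2]] :: real^2^2)"
  have MK: "M ** K = mat 1" using \<open>N > 0\<close>
    by (simp add: M_def K_def jN vec_eq_iff forall_2 matrix_matrix_mult_def sum_2 mat_def field_simps)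
  have M22: "(of_int N + 1) / 2 = (of_int (2 * j) :: real)" by (simp add: jN)
  have "even_integral_sym K"
    by (simp add: even_integral_sym_def K_def vec_eq_iff forall_2 transpose_def)
  moreover have "pos_def K"
  proof (rule pos_def_inverse[OF MK])
    fix y :: "real^2" assume "y \<noteq> 0"
    then have "y $ 1 \<noteq> 0 \<or> y $ 2 \<noteq> 0" by (simp add: vec_eq_iff forall_2)
    moreover have "y \<bullet> (M *v y) = 2 / of_int N * (y $ 1) ^ 2 + 2 * (y $ 1) * (y $ 2) + (of_int N + 1) / 2 * (y $ 2) ^ 2"
      by (simp add: M_def inner_vec_def sum_2 matrix_vector_mult_def power2_eq_square algebra_simps)
    ultimately show "y \<bullet> (M *v y) > 0" using binary_form_pos[of "of_int N" 2] \<open>N > 0\<close> by simp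
  qed
  moreover have "disc_iso_cyclic K N (1 / of_int N)"
  proof -
    interpret fractional_corner M 1 N 2
    proof
      show "M $ i $ 1 \<in> \<int>" if "i \<noteq> 1" for i
        using that exhaust_2[of i] by (auto simp: M_def)
      show "M $ i $ k \<in> \<int>" if "k \<noteq> 1" for i k
        using that exhaust_2[of i] exhaust_2[of k] by (auto simp: M_def M22)
    qed (use \<open>N > 0\<close> in \<open>simp_all add: M_def\<close>)
    have "odd N" using j by presburger
    then show ?thesis by (intro disc_iso_cyclic_inverse[OF MK, of 1]) (simp_all add: M_def)
  qed
  ultimately show ?thesis using matrix_inv_eqI[OF MK] by simp
qed

lemma lattice_3_pow2:
  assumes "even s" and "s \<ge> 2"
  defines "M \<equiv> vector [vector [3 / 2 ^ s, 1, 0], vector [1, (2 ^ s + 2) / 3, 1], vector [0, 1, 2]] :: real^3^3"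
  shows "invertible M \<and> even_integral_sym (matrix_inv M) \<and> pos_def (matrix_inv M) \<and>
    disc_iso_cyclic (matrix_inv M) (2 ^ s) (- 5 / 2 ^ (s + 1))"
proof -
  obtain t where s: "s = 2 * t" using \<open>even s\<close> by blast
  have "[(4::int) ^ t = 1 ^ t] (mod 3)" by (rule cong_pow) (simp add: cong_def)
  then have "[(2::int) ^ s = 1] (mod 3)" by (simp add: s power_mult)
  then obtain i where "(2::int) ^ s = 3 * i + 1" by (metis cong_iff_dvd_diff dvdE eq_diff_eq)
  then have "(2 ^ s :: real) = of_int (3 * i + 1)" by (metis of_int_numeral of_int_power)
  then have iQ: "(of_int i :: real) = (2 ^ s - 1) / 3" by simp
  define g :: int where "g = 2 ^ (s - 1)"
  have "(2 ^ s :: real) = 2 ^ Suc (s - 1)" using \<open>s \<ge> 2\<close> by (cases s) auto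
  then have gQ: "(of_int g :: real) = 2 ^ s / 2" by (simp add: g_def)
  define K where "K = (vector [vector [of_int (2 * (g * (2 * i + 1))), - of_int (4 * g), of_int (2 * g)],
                               vector [- of_int (4 * g), 6, -3],
                               vector [of_int (2 * g), -3, 2]] :: real^3^3)"
  have MK: "M ** K = mat 1"
    by (simp add: M_def K_def iQ gQ vec_eq_iff forall_3 matrix_matrix_mult_def sum_3 mat_def field_simps)
  have M22: "(2 ^ s + 2) / 3 = (of_int (i + 1) :: real)" by (simp add: iQ field_simps)
  have "even_integral_sym K"
    by (simp add: even_integral_sym_def K_def vec_eq_iff forall_3 transpose_def)
  moreover have "pos_def K"
  proof (rule pos_def_inverse[OF MK])
    fix y :: "real^3" assume "y \<noteq> 0"
    then have "y $ 1 \<noteq> 0 \<or> y $ 2 \<noteq> 0 \<or> y $ 3 \<noteq> 0" by (simp add: vec_eq_iff forall_3)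
    moreover have "y \<bullet> (M *v y) = 3 / 2 ^ s * (y $ 1) ^ 2 + 2 * (y $ 1) * (y $ 2)
        + (2 ^ s + 2) / 3 * (y $ 2) ^ 2 + 2 * (y $ 2) * (y $ 3) + 2 * (y $ 3) ^ 2"
      by (simp add: M_def inner_vec_def sum_3 matrix_vector_mult_def power2_eq_square algebra_simps)
    ultimately show "y \<bullet> (M *v y) > 0" using ternary_form_pos[of "2 ^ s"] by simp
  qed
  moreover have "disc_iso_cyclic K (2 ^ s) (- 5 / 2 ^ (s + 1))"
  proof -
    interpret fractional_corner M 1 "2 ^ s" 3
    proof
      show "M $ i $ 1 \<in> \<int>" if "i \<noteq> 1" for i
        using that exhaust_3[of i] by (auto simp: M_def)
      show "M $ i $ k \<in> \<int>" if "k \<noteq> 1" for i k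
        using that exhaust_3[of i] exhaust_3[of k] by (auto simp: M_def M22)
    qed (simp_all add: M_def)
    have "s - 2 + 3 = s + 1" using \<open>s \<ge> 2\<close> by simp
    then obtain a :: int where "odd a" and "2 ^ (s + 1) dvd 3 * a ^ 2 + 5"
      using odd_solution_3_sq_add_5_mod_pow2[of "s - 2"] by metis
    then obtain w where w: "3 * a ^ 2 + 5 = 2 ^ (s + 1) * w" by blast
    have "of_int a ^ 2 * M $ 1 $ 1 / 2 - (- 5 / 2 ^ (s + 1)) = (of_int (3 * a ^ 2 + 5) / 2 ^ (s + 1) :: real)"
      by (simp add: M_def field_simps)
    also have "\<dots> = of_int w" by (simp add: w)
    finally show ?thesis using \<open>odd a\<close> by (intro disc_iso_cyclic_inverse[OF MK, of a]) simp_all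
  qed
  ultimately show ?thesis using matrix_inv_eqI[OF MK] by simp
qed

theorem mainTheorem6:
  fixes p r :: nat
  assumes "prime p" and "odd p" and "odd r"
  shows
   "([int p = -1] (mod 8) \<longrightarrow>
      (let M = vector [vector [4 / real p ^ r, 1],
                       vector [1, (real p ^ r + 1) / 4]] :: real^2^2;
           K = matrix_inv M
       in invertible M \<and> even_integral_sym K \<and> pos_def K \<and> iso_A K p r)) \<and>
    ([int p = -3] (mod 8) \<longrightarrow>
      (let M = vector [vector [4 / real p ^ r, 1, 0, 0],
                       vector [1, (real p ^ r + 3) / 4, 1, 0],
                       vector [0, 1, 2, 1],
                       vector [0, 0, 1, 2]] :: real^4^4;
           K = matrix_inv M
       in invertible M \<and> even_integral_sym K \<and> pos_def K \<and> iso_A K p r)) \<and>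
    ([int p = 3] (mod 8) \<longrightarrow>
      (let M = vector [vector [2 / real p ^ r, 1],
                       vector [1, (real p ^ r + 1) / 2]] :: real^2^2;
           K = matrix_inv M
       in invertible M \<and> even_integral_sym K \<and> pos_def K \<and> iso_B K p r)) \<and>
    (\<forall>s::nat. even s \<and> s \<ge> 2 \<longrightarrow>
      (let M = vector [vector [3 / 2 ^ s, 1, 0],
                       vector [1, (2 ^ s + 2) / 3, 1],
                       vector [0, 1, 2]] :: real^3^3;
           K = matrix_inv M
       in invertible M \<and> even_integral_sym K \<and> pos_def K \<and> iso_D K s))"
proof -
  have pos: "int p ^ r > 0" using prime_gt_0_nat[OF assms(1)] by simp
  have mod_8: "[int p ^ r = int p] (mod 8)" using assms(2,3) by (intro odd_power_cong_mod_8) simp_all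
  have "[int p ^ r = -1] (mod 8)" if "[int p = -1] (mod 8)" using mod_8 that by (rule cong_trans)
  note i = lattice_2_cong_neg1_mod_8[OF pos this]
  have "[int p ^ r = -3] (mod 8)" if "[int p = -3] (mod 8)" using mod_8 that by (rule cong_trans)
  note ii = lattice_4_cong_neg3_mod_8[OF pos this]
  have "[int p ^ r = 3] (mod 4)" if "[int p = 3] (mod 8)"
    using cong_dvd_modulus[OF cong_trans[OF mod_8 that], of 4] by simp
  note iii = lattice_2_cong_3_mod_4[OF pos this]
  show ?thesis
    using i ii iii lattice_3_pow2
    by (auto simp: Let_def iso_D_def intro: iso_A_of_disc_2[OF assms(1,2)] iso_B_of_disc_1[OF assms(1)])
qed

end
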